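(* Let $0\le i\le n-2$. Let $b_{i+1,1},\dots,b_{i+1,r_{i+1}}\in\mathbb{Z}^r$ be linearly independent vectors whose span $L_{i+1}$ contains $W$. For each $j$, writing $b_{i+1,j}=(e_1,\dots,e_r)^T$, put $b'_j=(e_1,\dots,e_r,\sum_{k=1}^r e_kT_i(f_k))^T\in\mathbb{Z}^r\times\mathbb{R}$, and let $P=(0,\dots,0,v^\ell/B_i)^T$. Let $\Lambda$ be the lattice spanned by $b'_1,\dots,b'_{r_{i+1}},P$ (of rank $m=r_{i+1}+1$), let $b_1,\dots,b_m$ be an LLL-reduced basis of $\Lambda$ (parameter $3/4$) with Gram–Schmidt vectors $b_j^*$, and let $r_i$ be the smallest index such that $\|b_j^*\|>r+2$ for all $j>r_i$. Let $b_{i,j}\in\mathbb{Z}^r$ be the projection of $b_j$ onto the first $r$ coordinates ($1\le j\le r_i$), and $L_i=\mathbb{Z}b_{i,1}+\cdots+\mathbb{Z}b_{i,r_i}$. Then: (1) $W\subseteq L_i\subseteq L_{i+1}$; (2) $\|b_{i,j}\|\le (r+2)2^r$ for all $1\le j\le r_i$; (3) if $b_{i,j}=(e_1,\dots,e_r)^T$ then $|T_i(f_1^{e_1}\cdots f_r^{e_r})|\le (r+2)2^r$.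
   Context: Setting: $v$ a prime number, $\mathbb{Z}_v$ the $v$-adic integers; $f\in\mathbb{Z}[X]$ separable of degree $n\ge2$ with leading coefficient $\ell_f$ not divisible by $v$ and $f$ mod $v$ separable; $f=\ell_f f_1\cdots f_r$ with $f_i\in\mathbb{Z}_v[X]$ monic irreducible over $\mathbb{Q}_v$; $f=\ell_f g_1\cdots g_s$ with $g_j\in\mathbb{Q}[X]$ monic irreducible; $g_j=f_1^{w_{j,1}}\cdots f_r^{w_{j,r}}$ with $w_{j,k}\in\{0,1\}$, $w_j=(w_{j,1},\dots,w_{j,r})^T$, $W=\mathbb{Z}w_1+\cdots+\mathbb{Z}w_s\subseteq\mathbb{Z}^r$. For $e\in\mathbb{Z}^r$, $\Phi(f_1^{e_1}\cdots f_r^{e_r}):=\sum_k e_k f f_k'/f_k\in\mathbb{Z}_v[X]$. Fix $\ell>0$. For $c\in\mathbb{Z}_v$, "$c$ mod $v^\ell$" is the unique integer in $(-v^\ell/2,v^\ell/2]$ congruent to $c$ modulo $v^\ell\mathbb{Z}_v$. $M(f)$ is the Mahler measure of $f$ (|leading coefficient| times the product of $|\alpha|^{m_\alpha}$ over complex roots $|\alpha|>1$ with multiplicity $m_\alpha$), and $B_i=\binom{n-1}{i}nM(f)$. For $h=f_1^{e_1}\cdots f_r^{e_r}$, $T'_i(h)\in\mathbb{Z}$ is the coefficient of $X^i$ in $\Phi(h)$ taken mod $v^\ell$, and $T_i(h)=T'_i(h)/B_i$. $\|\cdot\|$ is the Euclidean norm. LLL-reduced with parameter $3/4$: Gram–Schmidt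 coefficients $\mu_{jk}$ satisfy $|\mu_{jk}|\le1/2$ and $\|b_j^*\|^2\ge(3/4-\mu_{j,j-1}^2)\|b_{j-1}^*\|^2$. *)

theory Defs
  imports "HOL-Computational_Algebra.Fraction_Field"
    "Berlekamp_Zassenhaus.Mahler_Measure" "Berlekamp_Zassenhaus.Poly_Mod"
begin

text \<open>A commutative domain 'z is (a copy of) the ring of v-adic integers iff the canonical
  map from 'z to the inverse limit of the rings Z/v^k Z is an isomorphism:
  (i) Z/v^k embeds into 'z/v^k 'z, (ii) every element of 'z is congruent to an integer
  modulo v^k, (iii) 'z is v-adically separated, (iv) 'z is v-adically complete.\<close>

definition is_vadic_integers :: "int \<Rightarrow> 'z::idom itself \<Rightarrow> bool" where
  "is_vadic_integers v _ \<longleftrightarrow>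
     (\<forall>k a. ((of_int (v ^ k) :: 'z) dvd of_int a) \<longleftrightarrow> v ^ k dvd a) \<and>
     (\<forall>(x::'z) k. \<exists>a::int. of_int (v ^ k) dvd (x - of_int a)) \<and>
     (\<forall>(x::'z). (\<forall>k. of_int (v ^ k) dvd x) \<longrightarrow> x = 0) \<and>
     (\<forall>s::nat \<Rightarrow> int. (\<forall>k. v ^ k dvd (s (Suc k) - s k)) \<longrightarrow>
        (\<exists>x::'z. \<forall>k. of_int (v ^ k) dvd (x - of_int (s k))))"

definition rat_to_fract :: "rat \<Rightarrow> 'z::idom fract" where
  "rat_to_fract q = (case quotient_of q of (a, b) \<Rightarrow> Fract (of_int a) (of_int b))"

definition smod_v :: "int \<Rightarrow> nat \<Rightarrow> 'z::idom \<Rightarrow> int" where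
  "smod_v v l c = (THE a::int. - (v ^ l) < 2 * a \<and> 2 * a \<le> v ^ l \<and>
                               (of_int (v ^ l) :: 'z) dvd (c - of_int a))"

definition pquot :: "'z::idom poly \<Rightarrow> 'z poly \<Rightarrow> 'z poly" where
  "pquot F G = (THE q. F = G * q)"

text \<open>Phi(f_1^e_1 ... f_r^e_r) = sum_k e_k f f_k' / f_k  (factors indexed 1..r).\<close>
definition Phi :: "int poly \<Rightarrow> (nat \<Rightarrow> 'z::idom poly) \<Rightarrow> nat \<Rightarrow> (nat \<Rightarrow> int) \<Rightarrow> 'z poly" where
  "Phi f fs r e = (\<Sum>k\<in>{1..r}. smult (of_int (e k))
                      (pquot (map_poly of_int f) (fs k) * pderiv (fs k)))"

definition Bbound :: "int poly \<Rightarrow> nat \<Rightarrow> real" where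
  "Bbound f i = real (degree f - 1 choose i) * real (degree f) * mahler_measure f"

definition Tprime :: "int \<Rightarrow> nat \<Rightarrow> int poly \<Rightarrow> (nat \<Rightarrow> 'z::idom poly) \<Rightarrow> nat \<Rightarrow> nat \<Rightarrow> (nat \<Rightarrow> int) \<Rightarrow> int" where
  "Tprime v l f fs r i e = smod_v v l (coeff (Phi f fs r e) i)"

definition Tval :: "int \<Rightarrow> nat \<Rightarrow> int poly \<Rightarrow> (nat \<Rightarrow> 'z::idom poly) \<Rightarrow> nat \<Rightarrow> nat \<Rightarrow> (nat \<Rightarrow> int) \<Rightarrow> real" where
  "Tval v l f fs r i e = real_of_int (Tprime v l f fs r i e) / Bbound f i"

definition unitv :: "nat \<Rightarrow> nat \<Rightarrow> int" where
  "unitv k = (\<lambda>k'. if k' = k then 1 else 0)"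

section \<open>Vectors (functions nat => real, coordinates 1..D, zero elsewhere), lattices, Gram--Schmidt, LLL\<close>

definition ipr :: "nat \<Rightarrow> (nat \<Rightarrow> real) \<Rightarrow> (nat \<Rightarrow> real) \<Rightarrow> real" where
  "ipr D x y = (\<Sum>k\<in>{1..D}. x k * y k)"

definition vnorm :: "nat \<Rightarrow> (nat \<Rightarrow> real) \<Rightarrow> real" where
  "vnorm D x = sqrt (ipr D x x)"

definition zspan :: "nat set \<Rightarrow> (nat \<Rightarrow> nat \<Rightarrow> real) \<Rightarrow> (nat \<Rightarrow> real) set" where
  "zspan J u = {x. \<exists>c::nat \<Rightarrow> int. x = (\<lambda>k. \<Sum>j\<in>J. real_of_int (c j) * u j k)}"

definition lin_indep :: "nat \<Rightarrow> nat set \<Rightarrow> (nat \<Rightarrow> nat \<Rightarrow> real) \<Rightarrow> bool" where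
  "lin_indep D J u \<longleftrightarrow> (\<forall>c::nat \<Rightarrow> real.
      (\<forall>k\<in>{1..D}. (\<Sum>j\<in>J. c j * u j k) = 0) \<longrightarrow> (\<forall>j\<in>J. c j = 0))"

function gso :: "nat \<Rightarrow> (nat \<Rightarrow> nat \<Rightarrow> real) \<Rightarrow> nat \<Rightarrow> nat \<Rightarrow> real" where
  "gso D b j = (\<lambda>k. b j k - (\<Sum>i\<in>{1..<j}.
       (ipr D (b j) (gso D b i) / ipr D (gso D b i) (gso D b i)) * gso D b i k))"
  by auto
termination by (relation "measure (\<lambda>(D, b, j). j)") auto

definition gs_mu :: "nat \<Rightarrow> (nat \<Rightarrow> nat \<Rightarrow> real) \<Rightarrow> nat \<Rightarrow> nat \<Rightarrow> real" where
  "gs_mu D b j i = ipr D (b j) (gso D b i) / ipr D (gso D b i) (gso D b i)"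

definition lll_reduced :: "nat \<Rightarrow> nat \<Rightarrow> (nat \<Rightarrow> nat \<Rightarrow> real) \<Rightarrow> bool" where
  "lll_reduced D m b \<longleftrightarrow>
     (\<forall>j\<in>{1..m}. \<forall>i\<in>{1..<j}. \<bar>gs_mu D b j i\<bar> \<le> 1/2) \<and>
     (\<forall>j\<in>{2..m}. (vnorm D (gso D b j))\<^sup>2 \<ge>
        (3/4 - (gs_mu D b j (j - 1))\<^sup>2) * (vnorm D (gso D b (j - 1)))\<^sup>2)"

end

theory Submission
  imports Defs "Berlekamp_Zassenhaus.Factor_Bound"
begin

(*
  A vector of Lambda is determined by its first r coordinates x, which form a vector of L_(i+1),
  and its last coordinate, which is (sum_k x_k T'_i(f_k) + a v^l) / B_i for some integer a.
  As Phi is linear in the exponent vector, sum_k x_k T'_i(f_k) is congruent modulo v^l to the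
  i-th coefficient of Phi(f_1^x_1 ... f_r^x_r), so T_i of that product is at most the last
  coordinate in absolute value.

  For a rational factor g_j of f, Gauss's lemma makes f g_j'/g_j = Phi(g_j) an integer
  polynomial, and Mignotte's bound applied to f/(X - alpha) for the roots alpha of g_j bounds
  its coefficients by B_i. Hence Lambda contains a lift of w_j of norm at most sqrt(r + 1).
  A lattice vector of norm at most r + 2 has no component along any b_j with
  ||b_j^*|| > r + 2 (project onto b_k^* for its last nonzero coefficient k), so it lies in the
  span of b_1, ..., b_(r_i): this gives W in L_i. Finally the LLL conditions give
  ||b_j|| <= 2^(r_i - 1) ||b_(r_i)^*|| <= 2^r (r + 2) for j <= r_i, which bounds both the
  projections b_(i,j) and, through the last coordinate, T_i.
*)

section \<open>Inner products and Gram--Schmidt orthogonalization\<close>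

definition restrict_coords :: "nat \<Rightarrow> (nat \<Rightarrow> real) \<Rightarrow> nat \<Rightarrow> real" where
  "restrict_coords r x = (\<lambda>k. if k \<in> {1..r} then x k else 0)"

lemma ipr_commute: "ipr D x y = ipr D y x"
  unfolding ipr_def by (simp add: mult.commute)

lemma ipr_self_nonneg: "0 \<le> ipr D x x"
  unfolding ipr_def by (auto intro: sum_nonneg)

lemma ipr_eq_0_if_self_eq_0: "ipr D y y = 0 \<Longrightarrow> ipr D x y = 0"
  unfolding ipr_def by (subst (asm) sum_nonneg_eq_0_iff) auto

lemma ipr_sum_left:
  "finite I \<Longrightarrow> ipr D (\<lambda>k. \<Sum>i\<in>I. c i * u i k) y = (\<Sum>i\<in>I. c i * ipr D (u i) y)"
  unfolding ipr_def by (simp add: sum_distrib_left sum_distrib_right mult_ac sum.swap[of _ I])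

lemma ipr_diff_left: "ipr D (\<lambda>k. x k - z k) y = ipr D x y - ipr D z y"
  unfolding ipr_def by (simp add: algebra_simps sum_subtractf)

lemma vnorm_nonneg: "0 \<le> vnorm D x"
  unfolding vnorm_def using ipr_self_nonneg by simp

lemma vnorm_power2: "(vnorm D x)\<^sup>2 = ipr D x x"
  unfolding vnorm_def using ipr_self_nonneg by simp

lemma vnorm_le_iff: "0 \<le> R \<Longrightarrow> vnorm D x \<le> R \<longleftrightarrow> ipr D x x \<le> R\<^sup>2"
  unfolding vnorm_def using ipr_self_nonneg[of D x]
  by (metis abs_of_nonneg real_sqrt_abs real_sqrt_le_iff)

lemma ipr_Cauchy_Schwarz: "(ipr D x y)\<^sup>2 \<le> ipr D x x * ipr D y y"
proof (cases "ipr D y y = 0")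
  case True
  then show ?thesis using ipr_eq_0_if_self_eq_0 by simp
next
  case False
  define a where "a = ipr D y y"
  define c where "c = ipr D x y"
  have a_pos: "a > 0" using False ipr_self_nonneg[of D y] a_def by linarith
  have "0 \<le> (\<Sum>k\<in>{1..D}. (a * x k - c * y k)\<^sup>2)" by (auto intro: sum_nonneg)
  also have "\<dots> = (\<Sum>k\<in>{1..D}. a\<^sup>2 * (x k * x k) - 2 * a * c * (x k * y k) + c\<^sup>2 * (y k * y k))"
    by (rule sum.cong) (auto simp: power2_eq_square algebra_simps)
  also have "\<dots> = a\<^sup>2 * ipr D x x - 2 * a * c * c + c\<^sup>2 * a"
    unfolding ipr_def a_def c_def by (simp add: sum.distrib sum_subtractf sum_distrib_left)
  also have "\<dots> = a * (a * ipr D x x - c\<^sup>2)" by (simp add: power2_eq_square algebra_simps)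
  finally have "0 \<le> a * ipr D x x - c\<^sup>2" using a_pos by (simp add: zero_le_mult_iff)
  then show ?thesis unfolding a_def c_def by (simp add: mult.commute)
qed

lemma abs_coord_le_vnorm: "k \<in> {1..D} \<Longrightarrow> \<bar>x k\<bar> \<le> vnorm D x"
  unfolding vnorm_def ipr_def
  by (rule real_le_rsqrt) (auto simp: power2_eq_square intro: member_le_sum)

lemma vnorm_restrict_coords_le: "r \<le> D \<Longrightarrow> vnorm r (restrict_coords r x) \<le> vnorm D x"
  unfolding vnorm_def ipr_def restrict_coords_def
  by (rule real_sqrt_le_mono, simp, rule sum_mono2) auto

lemma vnorm_le_sqrt_dim: "(\<And>k. k \<in> {1..D} \<Longrightarrow> \<bar>x k\<bar> \<le> 1) \<Longrightarrow> vnorm D x \<le> sqrt D"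
  unfolding vnorm_def ipr_def
  by (rule real_sqrt_le_mono, rule order.trans[OF sum_mono[where g = "\<lambda>_. 1"]])
     (auto simp: abs_square_le_1 power2_eq_square[symmetric])

declare gso.simps [simp del]

lemma gso_eq: "gso D b j k = b j k - (\<Sum>i\<in>{1..<j}. gs_mu D b j i * gso D b i k)"
  by (subst gso.simps) (simp add: gs_mu_def)

lemma gso_orthogonal_less: "i \<in> {1..<j} \<Longrightarrow> ipr D (gso D b j) (gso D b i) = 0"
proof (induction j arbitrary: i rule: less_induct)
  case (less j)
  have orth: "ipr D (gso D b t) (gso D b i) = 0" if "t \<in> {1..<j}" "t \<noteq> i" for t
  proof (cases "t < i")
    case True
    then show ?thesis using less.IH[of i t] that less.prems by (subst ipr_commute) auto
  next
    case False
    then show ?thesis using less.IH[of t i] that less.prems by auto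
  qed
  have "ipr D (gso D b j) (gso D b i) =
     ipr D (b j) (gso D b i) - (\<Sum>t\<in>{1..<j}. gs_mu D b j t * ipr D (gso D b t) (gso D b i))"
    by (subst gso_eq[abs_def], subst ipr_diff_left, subst ipr_sum_left) auto
  also have "(\<Sum>t\<in>{1..<j}. gs_mu D b j t * ipr D (gso D b t) (gso D b i))
      = gs_mu D b j i * ipr D (gso D b i) (gso D b i)"
    using less.prems by (subst sum.remove[of _ i]) (auto simp: orth)
  also have "ipr D (b j) (gso D b i) - gs_mu D b j i * ipr D (gso D b i) (gso D b i) = 0"
    by (cases "ipr D (gso D b i) (gso D b i) = 0") (auto simp: gs_mu_def ipr_eq_0_if_self_eq_0)
  finally show ?case .
qed

lemma gso_orthogonal:
  "i \<noteq> j \<Longrightarrow> 1 \<le> i \<Longrightarrow> 1 \<le> j \<Longrightarrow> ipr D (gso D b j) (gso D b i) = 0"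
  using gso_orthogonal_less[of i j D b] gso_orthogonal_less[of j i D b]
  by (cases "i < j") (auto simp: ipr_commute)

definition gs_coord :: "nat \<Rightarrow> (nat \<Rightarrow> nat \<Rightarrow> real) \<Rightarrow> nat \<Rightarrow> nat \<Rightarrow> real" where
  "gs_coord D b j t = (if t = j then 1 else gs_mu D b j t)"

lemma b_eq_sum_gso: "1 \<le> j \<Longrightarrow> b j = (\<lambda>k. \<Sum>t\<in>{1..j}. gs_coord D b j t * gso D b t k)"
proof (rule ext)
  fix k assume "1 \<le> j"
  then have "{1..j} = insert j {1..<j}" by auto
  then show "b j k = (\<Sum>t\<in>{1..j}. gs_coord D b j t * gso D b t k)"
    using gso_eq[of D b j k] by (simp add: gs_coord_def)
qed

lemma ipr_b_gso:
  assumes "1 \<le> j" "1 \<le> t"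
  shows "ipr D (b j) (gso D b t) = (if t \<le> j then gs_coord D b j t * ipr D (gso D b t) (gso D b t) else 0)"
proof -
  have "ipr D (b j) (gso D b t) = (\<Sum>s\<in>{1..j}. gs_coord D b j s * ipr D (gso D b s) (gso D b t))"
    by (subst b_eq_sum_gso[OF assms(1)], subst ipr_sum_left) auto
  also have "\<dots> = (\<Sum>s\<in>{1..j}. if s = t then gs_coord D b j s * ipr D (gso D b s) (gso D b t) else 0)"
    by (rule sum.cong) (use assms in \<open>auto simp: gso_orthogonal\<close>)
  finally show ?thesis using assms by (simp add: sum.delta)
qed

lemma ipr_b_self_eq_sum_gso:
  assumes "1 \<le> j"
  shows "ipr D (b j) (b j) = (\<Sum>t\<in>{1..j}. (gs_coord D b j t)\<^sup>2 * ipr D (gso D b t) (gso D b t))"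
proof -
  have "ipr D (b j) (b j) = (\<Sum>t\<in>{1..j}. gs_coord D b j t * ipr D (b j) (gso D b t))"
    by (subst (2) b_eq_sum_gso[OF assms], subst ipr_commute, subst ipr_sum_left)
       (auto simp: ipr_commute)
  also have "\<dots> = (\<Sum>t\<in>{1..j}. (gs_coord D b j t)\<^sup>2 * ipr D (gso D b t) (gso D b t))"
    using assms by (intro sum.cong) (auto simp: ipr_b_gso power2_eq_square)
  finally show ?thesis .
qed

section \<open>Lattices and LLL-reduced bases\<close>

lemma generator_in_zspan:
  assumes "finite J" "j \<in> J"
  shows "u j \<in> zspan J u"
proof -
  have coord: "u j k = (\<Sum>i\<in>J. real_of_int (if i = j then 1 else 0) * u i k)" for k
  proof -
    have "(\<Sum>i\<in>J. real_of_int (if i = j then 1 else 0) * u i k) = (\<Sum>i\<in>J. if i = j then u i k else 0)"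
      by (rule sum.cong) auto
    then show ?thesis using assms by simp
  qed
  show ?thesis unfolding zspan_def
    by (intro CollectI exI[of _ "\<lambda>i. if i = j then 1 else 0"] ext) (rule coord)
qed

lemma zspan_int_comb:
  fixes d :: "nat \<Rightarrow> int"
  assumes "finite I" "finite J" "\<forall>i\<in>I. x i \<in> zspan J u"
  shows "(\<lambda>k. \<Sum>i\<in>I. real_of_int (d i) * x i k) \<in> zspan J u"
proof -
  from assms(3) have "\<forall>i\<in>I. \<exists>c::nat \<Rightarrow> int. x i = (\<lambda>k. \<Sum>j\<in>J. real_of_int (c j) * u j k)"
    unfolding zspan_def by auto
  then obtain C where C: "\<forall>i\<in>I. x i = (\<lambda>k. \<Sum>j\<in>J. real_of_int (C i j) * u j k)"
    by metis
  have "(\<lambda>k. \<Sum>i\<in>I. real_of_int (d i) * x i k) =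
        (\<lambda>k. \<Sum>j\<in>J. real_of_int (\<Sum>i\<in>I. d i * C i j) * u j k)"
  proof (rule ext)
    fix k
    have "(\<Sum>i\<in>I. real_of_int (d i) * x i k) =
          (\<Sum>i\<in>I. real_of_int (d i) * (\<Sum>j\<in>J. real_of_int (C i j) * u j k))"
      using C by (intro sum.cong) auto
    also have "\<dots> = (\<Sum>j\<in>J. real_of_int (\<Sum>i\<in>I. d i * C i j) * u j k)"
      by (simp add: sum_distrib_left sum_distrib_right mult_ac sum.swap[of _ I])
    finally show "(\<Sum>i\<in>I. real_of_int (d i) * x i k) =
          (\<Sum>j\<in>J. real_of_int (\<Sum>i\<in>I. d i * C i j) * u j k)" .
  qed
  then show ?thesis unfolding zspan_def mem_Collect_eq by (rule exI[of _ "\<lambda>j. \<Sum>i\<in>I. d i * C i j"])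
qed

lemma zspan_subsetI:
  assumes "finite I" "finite J" "\<forall>i\<in>I. x i \<in> zspan J u"
  shows "zspan I x \<subseteq> zspan J u"
  using zspan_int_comb[OF assms] unfolding zspan_def by blast

lemma restrict_coords_zspan:
  assumes "x \<in> zspan J u"
  shows "restrict_coords r x \<in> zspan J (\<lambda>j. restrict_coords r (u j))"
proof -
  obtain c :: "nat \<Rightarrow> int" where "x = (\<lambda>k. \<Sum>j\<in>J. real_of_int (c j) * u j k)"
    using assms unfolding zspan_def by blast
  then have "restrict_coords r x = (\<lambda>k. \<Sum>j\<in>J. real_of_int (c j) * restrict_coords r (u j) k)"
    by (auto simp: restrict_coords_def fun_eq_iff intro: sum.neutral)
  then show ?thesis unfolding zspan_def mem_Collect_eq by (rule exI[of _ c])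
qed

lemma exists_lin_dep_if_card_gt:
  fixes u :: "nat \<Rightarrow> nat \<Rightarrow> real"
  assumes "finite J" "D < card J"
  shows "\<exists>c. (\<forall>k\<in>{1..D}. (\<Sum>j\<in>J. c j * u j k) = 0) \<and> (\<exists>j\<in>J. c j \<noteq> 0)"
  using assms
proof (induction D arbitrary: J u)
  case 0
  then obtain j0 where "j0 \<in> J" by fastforce
  then show ?case by (intro exI[of _ "\<lambda>j. if j = j0 then 1 else 0"]) auto
next
  case (Suc D)
  show ?case
  proof (cases "\<forall>j\<in>J. u j (Suc D) = 0")
    case True
    from Suc.IH[of J u] Suc.prems obtain c where
      c: "\<forall>k\<in>{1..D}. (\<Sum>j\<in>J. c j * u j k) = 0" "\<exists>j\<in>J. c j \<noteq> 0" by auto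
    have "\<forall>k\<in>{1..Suc D}. (\<Sum>j\<in>J. c j * u j k) = 0"
      using c(1) True by (auto simp: le_Suc_eq)
    with c(2) show ?thesis by blast
  next
    case False
    \<comment> \<open>Eliminate the last coordinate using a generator j0 on which it does not vanish.\<close>
    then obtain j0 where j0: "j0 \<in> J" "u j0 (Suc D) \<noteq> 0" by auto
    define J' where "J' = J - {j0}"
    define u' where "u' = (\<lambda>j k. u j k - (u j (Suc D) / u j0 (Suc D)) * u j0 k)"
    have J': "finite J'" "D < card J'" using Suc.prems j0 unfolding J'_def by auto
    from Suc.IH[OF J', of u'] obtain c' where
      c': "\<forall>k\<in>{1..D}. (\<Sum>j\<in>J'. c' j * u' j k) = 0" "\<exists>j\<in>J'. c' j \<noteq> 0" by auto
    define a where "a = - (\<Sum>j\<in>J'. c' j * (u j (Suc D) / u j0 (Suc D)))"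
    define c where "c = (\<lambda>j. if j = j0 then a else c' j)"
    have J: "J = insert j0 J'" "j0 \<notin> J'" using j0 unfolding J'_def by auto
    have comb: "(\<Sum>j\<in>J. c j * u j k) = (\<Sum>j\<in>J'. c' j * u' j k)" for k
    proof -
      have "(\<Sum>j\<in>J. c j * u j k) = a * u j0 k + (\<Sum>j\<in>J'. c' j * u j k)"
        using J J' unfolding c_def by (simp add: sum.insert) (intro sum.cong, auto)
      also have "\<dots> = (\<Sum>j\<in>J'. c' j * u' j k)"
        unfolding u'_def a_def
        by (simp add: algebra_simps sum_subtractf sum_distrib_left sum_distrib_right)
      finally show ?thesis .
    qed
    have "u' j (Suc D) = 0" for j unfolding u'_def using j0 by simp
    then have "\<forall>k\<in>{1..Suc D}. (\<Sum>j\<in>J. c j * u j k) = 0"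
      using c'(1) by (auto simp: comb le_Suc_eq)
    moreover have "\<exists>j\<in>J. c j \<noteq> 0" using c' J unfolding c_def by auto
    ultimately show ?thesis by blast
  qed
qed

lemma lin_indep_card_le: "lin_indep D J u \<Longrightarrow> finite J \<Longrightarrow> card J \<le> D"
  using exists_lin_dep_if_card_gt[of J D u] unfolding lin_indep_def by (meson not_le)

text \<open>Let k > t be the last index with c_k \<noteq> 0. As b_k^* is orthogonal to b_1, ..., b_(k-1),
  the inner product of y with b_k^* is c_k ||b_k^*||^2, and Cauchy--Schwarz together with
  ||y|| \<le> R < ||b_k^*|| forces |c_k| < 1.\<close>

lemma short_comb_coeff_eq_0:
  fixes c :: "nat \<Rightarrow> int"
  assumes y: "y = (\<lambda>k. \<Sum>j\<in>{1..m}. real_of_int (c j) * b j k)"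
    and big: "\<forall>j. t < j \<and> j \<le> m \<longrightarrow> R < vnorm D (gso D b j)"
    and y_short: "vnorm D y \<le> R"
  shows "\<forall>j\<in>{1..m}. t < j \<longrightarrow> c j = 0"
proof (rule ccontr)
  assume contra: "\<not> ?thesis"
  define S where "S = {j\<in>{1..m}. t < j \<and> c j \<noteq> 0}"
  define k where "k = Max S"
  have S: "finite S" "S \<noteq> {}" using contra unfolding S_def by auto
  have k: "1 \<le> k" "k \<le> m" "t < k" "c k \<noteq> 0" using Max_in[OF S] unfolding k_def S_def by auto
  have above: "c j = 0" if "j \<in> {1..m}" "k < j" for j
    using that k Max_ge[OF S(1), of j] unfolding k_def S_def by fastforce
  have R: "0 \<le> R" using y_short vnorm_nonneg order.trans by blast
  define G where "G = ipr D (gso D b k) (gso D b k)"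
  have "R\<^sup>2 < G"
    using big k R vnorm_le_iff[OF R, of D "gso D b k"] unfolding G_def by auto
  moreover have "ipr D y y \<le> R\<^sup>2" using y_short vnorm_le_iff[OF R] by blast
  ultimately have yG: "ipr D y y < G" by linarith
  have "ipr D y (gso D b k) = (\<Sum>j\<in>{1..m}. real_of_int (c j) * ipr D (b j) (gso D b k))"
    unfolding y by (subst ipr_sum_left) auto
  also have "\<dots> = (\<Sum>j\<in>{1..m}. if j = k then real_of_int (c k) * G else 0)"
    by (rule sum.cong) (use k above in \<open>auto simp: ipr_b_gso G_def gs_coord_def\<close>)
  finally have "ipr D y (gso D b k) = real_of_int (c k) * G" using k by simp
  then have "(real_of_int (c k))\<^sup>2 * G * G \<le> ipr D y y * G"
    using ipr_Cauchy_Schwarz[of D y "gso D b k"] unfolding G_def by (simp add: power2_eq_square mult_ac)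
  moreover have "0 < G" using yG ipr_self_nonneg[of D y] by linarith
  ultimately have "(real_of_int (c k))\<^sup>2 * G \<le> ipr D y y" by simp
  then have "(real_of_int (c k))\<^sup>2 * G < 1 * G" using yG by linarith
  then have "(real_of_int (c k))\<^sup>2 < 1" using \<open>0 < G\<close> mult_less_cancel_right_pos by blast
  then have "\<bar>real_of_int (c k)\<bar> < 1" using abs_square_less_1 by blast
  then have "\<bar>c k\<bar> < 1" by (metis of_int_abs of_int_less_1_iff)
  then show False using k by simp
qed

lemma short_lattice_vector_in_prefix:
  assumes "y \<in> zspan {1..m} b" "vnorm D y \<le> R"
    and "\<forall>j. t < j \<and> j \<le> m \<longrightarrow> R < vnorm D (gso D b j)" "t \<le> m"
  shows "y \<in> zspan {1..t} b"
proof -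
  obtain c :: "nat \<Rightarrow> int" where c: "y = (\<lambda>k. \<Sum>j\<in>{1..m}. real_of_int (c j) * b j k)"
    using assms(1) unfolding zspan_def by blast
  have "\<forall>j\<in>{1..m}. t < j \<longrightarrow> c j = 0"
    using short_comb_coeff_eq_0[OF c assms(3,2)] .
  then have "y = (\<lambda>k. \<Sum>j\<in>{1..t}. real_of_int (c j) * b j k)"
    unfolding c using assms(4) by (intro ext sum.mono_neutral_right) auto
  then show ?thesis unfolding zspan_def by blast
qed

lemma lll_gso_step:
  assumes "lll_reduced D m b" "2 \<le> j" "j \<le> m"
  shows "ipr D (gso D b (j - 1)) (gso D b (j - 1)) \<le> 2 * ipr D (gso D b j) (gso D b j)"
proof -
  have "\<bar>gs_mu D b j (j - 1)\<bar> \<le> 1/2" using assms unfolding lll_reduced_def by auto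
  then have "(gs_mu D b j (j - 1))\<^sup>2 \<le> (1/2)\<^sup>2" by (metis abs_ge_zero power2_abs power_mono)
  then have "1/2 * ipr D (gso D b (j - 1)) (gso D b (j - 1))
      \<le> (3/4 - (gs_mu D b j (j - 1))\<^sup>2) * ipr D (gso D b (j - 1)) (gso D b (j - 1))"
    by (intro mult_right_mono ipr_self_nonneg) (simp add: power2_eq_square)
  also have "\<dots> \<le> ipr D (gso D b j) (gso D b j)"
    using assms unfolding lll_reduced_def vnorm_power2 by auto
  finally show ?thesis by simp
qed

lemma lll_gso_chain:
  assumes "lll_reduced D m b" "1 \<le> k" "k \<le> t" "t \<le> m"
  shows "ipr D (gso D b k) (gso D b k) \<le> 2 ^ (t - k) * ipr D (gso D b t) (gso D b t)"
  using assms(3,4)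
proof (induction t rule: dec_induct)
  case (step t)
  have "ipr D (gso D b k) (gso D b k) \<le> 2 ^ (t - k) * ipr D (gso D b t) (gso D b t)"
    using step by simp
  also have "\<dots> \<le> 2 ^ (t - k) * (2 * ipr D (gso D b (Suc t)) (gso D b (Suc t)))"
    using lll_gso_step[OF assms(1), of "Suc t"] step assms(2) by (intro mult_left_mono) auto
  also have "\<dots> = 2 ^ (Suc t - k) * ipr D (gso D b (Suc t)) (gso D b (Suc t))"
    using step by (simp add: Suc_diff_le)
  finally show ?case .
qed simp

lemma one_plus_quarter_le_power2: "1 + real n / 4 \<le> 2 ^ n"
  by (induction n) (auto simp: field_simps)

lemma lll_vnorm_le:
  assumes lll: "lll_reduced D m b" and j: "1 \<le> j" "j \<le> t" and "t \<le> m"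
  shows "vnorm D (b j) \<le> 2 ^ (t - 1) * vnorm D (gso D b t)"
proof -
  define Q where "Q = 2 ^ (t - 1) * ipr D (gso D b t) (gso D b t)"
  have gso_le: "ipr D (gso D b s) (gso D b s) \<le> Q" if "1 \<le> s" "s \<le> j" for s
  proof -
    have "ipr D (gso D b s) (gso D b s) \<le> 2 ^ (t - s) * ipr D (gso D b t) (gso D b t)"
      using lll_gso_chain[OF lll, of s t] that assms by auto
    also have "\<dots> \<le> Q"
      unfolding Q_def using that by (intro mult_right_mono power_increasing ipr_self_nonneg) auto
    finally show ?thesis .
  qed
  have coord: "(gs_coord D b j s)\<^sup>2 \<le> (if s = j then 1 else 1/4)" if "s \<in> {1..j}" for s
  proof (cases "s = j")
    case False
    then have "\<bar>gs_mu D b j s\<bar> \<le> 1/2" using assms that unfolding lll_reduced_def by auto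
    then have "(gs_mu D b j s)\<^sup>2 \<le> (1/2)\<^sup>2" by (metis abs_ge_zero power2_abs power_mono)
    then show ?thesis using False unfolding gs_coord_def by (simp add: power2_eq_square)
  qed (simp add: gs_coord_def)
  have split: "{1..j} = insert j {1..<j}" using j by auto
  have "ipr D (b j) (b j) \<le> (\<Sum>s\<in>{1..j}. (if s = j then 1 else 1/4) * Q)"
    unfolding ipr_b_self_eq_sum_gso[OF j(1)]
    by (intro sum_mono mult_mono coord gso_le) (auto simp: ipr_self_nonneg)
  also have "\<dots> = (1 + real (j - 1) / 4) * Q" unfolding split by (simp add: algebra_simps)
  also have "\<dots> \<le> 2 ^ (t - 1) * Q"
    using order.trans[OF one_plus_quarter_le_power2 power_increasing[of "j - 1" "t - 1" 2]] j
    by (intro mult_right_mono) (auto simp: Q_def ipr_self_nonneg)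
  also have "\<dots> = (2 ^ (t - 1) * vnorm D (gso D b t))\<^sup>2"
    unfolding Q_def power_mult_distrib vnorm_power2 by (simp add: power2_eq_square)
  finally show ?thesis
    by (subst vnorm_le_iff) (simp_all add: vnorm_nonneg)
qed

lemma lll_prefix_vnorm_le:
  assumes "lll_reduced D m b" "j \<in> {1..t}" "t \<le> m" "m \<le> n + 1" "vnorm D (gso D b t) \<le> R"
  shows "vnorm D (b j) \<le> R * 2 ^ n"
proof -
  have "vnorm D (b j) \<le> 2 ^ (t - 1) * vnorm D (gso D b t)"
    using assms by (intro lll_vnorm_le) auto
  also have "\<dots> \<le> 2 ^ n * R"
    using assms vnorm_nonneg[of D "gso D b t"] by (intro mult_mono power_increasing) auto
  finally show ?thesis by (simp add: mult.commute)
qed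

lemma Least_tail:
  fixes a :: "nat \<Rightarrow> real" and m :: nat and R :: real
  defines "t \<equiv> LEAST t. \<forall>j. t < j \<and> j \<le> m \<longrightarrow> R < a j"
  shows Least_tail_le: "t \<le> m"
    and Least_tail_gt: "\<forall>j. t < j \<and> j \<le> m \<longrightarrow> R < a j"
    and Least_tail_at: "1 \<le> t \<Longrightarrow> a t \<le> R"
proof -
  let ?P = "\<lambda>t. \<forall>j. t < j \<and> j \<le> m \<longrightarrow> R < a j"
  have "?P m" by auto
  then show "t \<le> m" unfolding t_def by (rule Least_le)
  from \<open>?P m\<close> show P_t: "?P t" unfolding t_def by (rule LeastI)
  assume "1 \<le> t"
  then have "\<not> ?P (t - 1)" unfolding t_def by (intro not_less_Least) auto
  then obtain j where "t - 1 < j" "j \<le> m" "\<not> R < a j" by auto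
  with P_t have "j = t" by (cases "t < j") auto
  with \<open>\<not> R < a j\<close> show "a t \<le> R" by simp
qed

section \<open>Coefficient bounds for logarithmic derivatives\<close>

lemma mahler_measure_poly_nonneg: "0 \<le> mahler_measure_poly h"
  unfolding mahler_measure_poly_via_monic using mahler_measure_monic_ge_0 by simp

lemma cmod_coeff_le_mahler_measure:
  "cmod (coeff h i) \<le> real (degree h choose i) * mahler_measure_poly h"
proof (cases "i \<le> degree h")
  case False
  then show ?thesis by (simp add: coeff_eq_0 mahler_measure_poly_nonneg)
next
  case True
  have lc: "cmod (lead_coeff h) \<le> mahler_measure_poly h"
    unfolding mahler_measure_poly_via_monic
    using mahler_measure_monic_ge_1[of h] by (simp add: mult_le_cancel_left1)
  have "cmod (coeff h i) \<le> (degree h - 1 choose i) * mahler_measure_poly h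
      + min i 1 * (degree h - 1 choose (i - 1)) * cmod (lead_coeff h)"
    by (rule mignotte_helper_coeff)
  also have "\<dots> \<le> (degree h - 1 choose i) * mahler_measure_poly h
      + min i 1 * (degree h - 1 choose (i - 1)) * mahler_measure_poly h"
    using lc by (intro add_left_mono mult_left_mono) auto
  also have "\<dots> = real ((degree h - 1 choose i) + min i 1 * (degree h - 1 choose (i - 1)))
      * mahler_measure_poly h"
    by (simp add: algebra_simps)
  also have "(degree h - 1 choose i) + min i 1 * (degree h - 1 choose (i - 1)) = degree h choose i"
    using True by (cases i; cases "degree h") auto
  finally show ?thesis .
qed

lemma mahler_measure_poly_le_mult_linear:
  "mahler_measure_poly (K :: complex poly) \<le> mahler_measure_poly (K * [:- a, 1:])"
proof -
  have "mahler_measure_poly [:- a, 1:] = max 1 (cmod a)" by simp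
  then have "mahler_measure_poly (K * [:- a, 1:]) = mahler_measure_poly K * max 1 (cmod a)"
    by (simp only: measure_eq_prod)
  then show ?thesis using mahler_measure_poly_nonneg[of K] by (simp add: mult_le_cancel_left1)
qed

text \<open>Here pderiv (x - a) L = L + (x - a) L', and both summands are controlled by the
  Mignotte bound, so each root of the product contributes one copy of the bound.\<close>

lemma cmod_coeff_mult_pderiv_linear_factors_le:
  fixes K :: "complex poly"
  assumes "K \<noteq> 0"
  shows "cmod (coeff (K * pderiv (\<Prod>a\<leftarrow>as. [:- a, 1:])) i) \<le>
    real (length as) * real ((degree K + length as - 1) choose i)
      * mahler_measure_poly (K * (\<Prod>a\<leftarrow>as. [:- a, 1:]))"
  using assms
proof (induction as arbitrary: K)
  case (Cons a as)
  define L where "L = (\<Prod>a\<leftarrow>as. [:- a, 1:] :: complex poly)"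
  define Ka where "Ka = K * [:- a, 1:]"
  let ?n = "degree K + length (a # as) - 1"
  let ?M = "mahler_measure_poly (K * (\<Prod>a\<leftarrow>a # as. [:- a, 1:]))"
  have lin: "[:- a, 1:] \<noteq> 0" "degree [:- a, 1:] = 1" by auto
  have nonzero: "L \<noteq> 0" "Ka \<noteq> 0"
    unfolding L_def Ka_def using Cons.prems lin by (auto simp: prod_list_zero_iff simp del: mult_pCons_right)
  have "degree (K * L) = degree K + length as"
    using degree_mult_eq[OF Cons.prems nonzero(1)] degree_linear_factors[of uminus as]
    by (simp add: L_def)
  moreover have "degree Ka = degree K + 1"
    using degree_mult_eq[OF Cons.prems lin(1)] lin(2) by (simp add: Ka_def)
  ultimately have deg: "degree (K * L) = ?n" "degree Ka + length as - 1 = ?n" by simp_all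
  have prod: "K * (\<Prod>a\<leftarrow>a # as. [:- a, 1:]) = Ka * L" "Ka * L = (K * L) * [:- a, 1:]"
    unfolding L_def Ka_def by (simp_all only: list.map prod_list.Cons mult_ac)
  have "pderiv [:- a, 1:] = 1" by (simp add: pderiv_pCons)
  then have split: "K * pderiv (\<Prod>a\<leftarrow>a # as. [:- a, 1:]) = K * L + Ka * pderiv L"
    unfolding L_def Ka_def list.map prod_list.Cons pderiv_mult
    by (simp only: distrib_left mult_1_right mult.assoc) (rule add.commute)
  have "cmod (coeff (K * L) i) \<le> real (?n choose i) * mahler_measure_poly (K * L)"
    using cmod_coeff_le_mahler_measure[of "K * L" i] deg(1) by simp
  also have "\<dots> \<le> real (?n choose i) * ?M"
    unfolding prod using mahler_measure_poly_le_mult_linear by (rule mult_left_mono) simp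
  finally have "cmod (coeff (K * L) i) \<le> real (?n choose i) * ?M" .
  moreover have "cmod (coeff (Ka * pderiv L) i) \<le> real (length as) * real (?n choose i) * ?M"
    using Cons.IH[OF nonzero(2)] unfolding prod deg(2) L_def .
  ultimately show ?case
    unfolding split coeff_add
    by (intro order.trans[OF norm_triangle_ineq]) (simp add: algebra_simps)
qed simp

lemma abs_coeff_cofactor_mult_pderiv_le:
  fixes f g h :: "int poly"
  assumes f: "f = g * h" "f \<noteq> 0"
  shows "\<bar>real_of_int (coeff (h * pderiv g) i)\<bar>
    \<le> real (degree g) * real (degree f - 1 choose i) * mahler_measure f"
proof -
  let ?C = "map_poly complex_of_int"
  define as where "as = complex_roots_complex (?C g)"
  have nonzero: "g \<noteq> 0" "h \<noteq> 0" using f by auto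
  have g_roots: "?C g = smult (lead_coeff (?C g)) (\<Prod>a\<leftarrow>as. [:- a, 1:])" "length as = degree g"
    using complex_roots[of "?C g"] unfolding as_def by auto
  define K where "K = smult (lead_coeff (?C g)) (?C h)"
  have K: "K \<noteq> 0" "degree K = degree h" using nonzero unfolding K_def by auto
  have pderiv_eq: "?C (h * pderiv g) = K * pderiv (\<Prod>a\<leftarrow>as. [:- a, 1:])"
    unfolding K_def of_int_hom.map_poly_pderiv of_int_poly_hom.hom_mult
    by (subst g_roots(1)) (simp add: pderiv_smult)
  have f_eq: "K * (\<Prod>a\<leftarrow>as. [:- a, 1:]) = ?C f"
    unfolding K_def f(1) of_int_poly_hom.hom_mult by (subst (2) g_roots(1)) (simp add: mult_ac)
  have deg: "degree K + length as - 1 = degree f - 1"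
    using K g_roots(2) nonzero f by (simp add: degree_mult_eq)
  have "\<bar>real_of_int (coeff (h * pderiv g) i)\<bar> = cmod (coeff (?C (h * pderiv g)) i)"
    by simp
  also have "\<dots> \<le> real (length as) * real ((degree K + length as - 1) choose i)
      * mahler_measure_poly (K * (\<Prod>a\<leftarrow>as. [:- a, 1:]))"
    unfolding pderiv_eq by (rule cmod_coeff_mult_pderiv_linear_factors_le[OF K(1)])
  also have "\<dots> = real (degree g) * real ((degree f - 1) choose i) * mahler_measure f"
    unfolding f_eq deg mahler_measure_def by (simp only: g_roots(2))
  finally show ?thesis .
qed

text \<open>By Gauss's lemma g is a rational multiple of an integer factor rg of f, so that
  f g'/g = (f / rg) rg' has integer coefficients.\<close>

lemma rat_factor_log_deriv_int_bound:
  fixes f :: "int poly" and g :: "rat poly"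
  assumes dvd: "g dvd of_int_poly f" and f0: "f \<noteq> 0"
  shows "\<exists>P :: int poly. g * of_int_poly P = of_int_poly f * pderiv g \<and>
     (\<forall>i. \<bar>real_of_int (coeff P i)\<bar> \<le> Bbound f i)"
proof -
  obtain h where fh: "of_int_poly f = g * h" using dvd by (auto elim: dvdE)
  obtain c rg where rn: "rat_to_normalized_int_poly g = (c, rg)" by force
  from rat_to_normalized_int_poly[OF rn] have g: "g = smult c (of_int_poly rg)" by auto
  from rat_to_int_factor_explicit[OF fh rn] obtain H where f: "f = rg * H"
    by (metis mult_smult_right)
  define P where "P = H * pderiv rg"
  have "g * of_int_poly P = of_int_poly f * pderiv g"
    unfolding P_def f g of_int_poly_hom.hom_mult of_int_hom.map_poly_pderiv pderiv_smult
    by (simp add: mult_ac)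
  moreover have "\<bar>real_of_int (coeff P i)\<bar> \<le> Bbound f i" for i
  proof -
    have "degree rg \<le> degree f" using f f0 by (intro dvd_imp_degree_le) auto
    then have "real (degree rg) * real (degree f - 1 choose i) * mahler_measure f
        \<le> real (degree f) * real (degree f - 1 choose i) * mahler_measure f"
      by (intro mult_right_mono mahler_measure_ge_0) auto
    with abs_coeff_cofactor_mult_pderiv_le[OF f f0, of i] show ?thesis
      unfolding P_def Bbound_def by (simp add: mult_ac)
  qed
  ultimately show ?thesis by blast
qed

lemma Bbound_pos:
  assumes "i < degree f"
  shows "0 < Bbound f i"
proof -
  have "1 \<le> mahler_measure f" using assms by (intro mahler_measure_poly_ge_1) auto
  then show ?thesis using assms unfolding Bbound_def by (auto intro!: mult_pos_pos zero_less_binomial)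
qed

section \<open>The v-adic integers and the map Phi\<close>

lemma pquot_unique: "G \<noteq> 0 \<Longrightarrow> F = G * Q \<Longrightarrow> pquot F G = Q"
  unfolding pquot_def by (rule the1_equality) auto

lemma mult_pquot: "G \<noteq> 0 \<Longrightarrow> G dvd F \<Longrightarrow> F = G * pquot F G"
  by (metis dvdE pquot_unique)

lemma Phi_unitv:
  "k \<in> {1..r} \<Longrightarrow> Phi f fs r (unitv k) = pquot (map_poly of_int f) (fs k) * pderiv (fs k)"
proof -
  assume k: "k \<in> {1..r}"
  have "Phi f fs r (unitv k) = (\<Sum>k'\<in>{1..r}. if k' = k then pquot (map_poly of_int f) (fs k') * pderiv (fs k') else 0)"
    unfolding Phi_def unitv_def by (rule sum.cong) auto
  then show ?thesis using k by simp
qed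

lemma coeff_Phi:
  "coeff (Phi f fs r e) i
    = (\<Sum>k\<in>{1..r}. of_int (e k) * coeff (pquot (map_poly of_int f) (fs k) * pderiv (fs k)) i)"
  unfolding Phi_def by (simp add: coeff_sum)

lemma prod_factors_mult_Phi:
  fixes fs :: "nat \<Rightarrow> 'z::idom poly"
  assumes fs_fact: "map_poly of_int f = smult (of_int (lead_coeff f)) (\<Prod>k\<in>{1..r}. fs k)"
    and mon: "\<forall>k\<in>{1..r}. monic (fs k)" and e01: "\<forall>k\<in>{1..r}. e k \<in> {0, 1}"
  shows "(\<Prod>k\<in>{1..r}. fs k ^ nat (e k)) * Phi f fs r e
    = map_poly of_int f * pderiv (\<Prod>k\<in>{1..r}. fs k ^ nat (e k))"
proof -
  define F where "F = (map_poly of_int f :: 'z poly)"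
  define K where "K = {k\<in>{1..r}. e k = 1}"
  have pow_e: "fs k ^ nat (e k) = (if e k = 1 then fs k else 1)" if "k \<in> {1..r}" for k
    using e01 that by force
  have smult_e: "smult (of_int (e k)) X = (if e k = 1 then X else 0)"
    if "k \<in> {1..r}" for k and X :: "'z poly"
    using e01 that by force
  have prod_K: "(\<Prod>k\<in>{1..r}. fs k ^ nat (e k)) = (\<Prod>k\<in>K. fs k)"
    unfolding K_def prod.inter_filter[OF finite_atLeastAtMost]
    by (rule prod.cong) (simp_all add: pow_e)
  have Phi_K: "Phi f fs r e = (\<Sum>k\<in>K. pquot F (fs k) * pderiv (fs k))"
    unfolding K_def sum.inter_filter[OF finite_atLeastAtMost] Phi_def F_def
    by (rule sum.cong) (simp_all add: smult_e)
  have F: "F = fs k * pquot F (fs k)" if "k \<in> K" for k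
  proof (rule mult_pquot)
    show "fs k \<noteq> 0" using mon that unfolding K_def by fastforce
    have "(\<Prod>k\<in>{1..r}. fs k) = fs k * (\<Prod>k\<in>{1..r} - {k}. fs k)"
      using that unfolding K_def by (auto simp: prod.remove)
    then show "fs k dvd F" unfolding F_def fs_fact by (simp add: dvd_smult)
  qed
  have "(\<Prod>k\<in>K. fs k) * (\<Sum>k\<in>K. pquot F (fs k) * pderiv (fs k))
      = (\<Sum>k\<in>K. F * ((\<Prod>k\<in>K - {k}. fs k) * pderiv (fs k)))"
    unfolding sum_distrib_left
  proof (rule sum.cong)
    fix k assume "k \<in> K"
    then have "(\<Prod>k\<in>K. fs k) = fs k * (\<Prod>k\<in>K - {k}. fs k)"
      unfolding K_def by (auto simp: prod.remove)
    with F[OF \<open>k \<in> K\<close>] show "(\<Prod>k\<in>K. fs k) * (pquot F (fs k) * pderiv (fs k))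
        = F * ((\<Prod>k\<in>K - {k}. fs k) * pderiv (fs k))"
      by (simp add: mult_ac)
  qed simp
  also have "\<dots> = F * pderiv (\<Prod>k\<in>K. fs k)"
    unfolding K_def by (simp add: pderiv_prod sum_distrib_left)
  finally show ?thesis unfolding prod_K Phi_K F_def .
qed

lemma pow_dvd_all_imp_eq_0:
  fixes v x :: int
  assumes v: "2 \<le> v" and dvd: "\<forall>k. v ^ k dvd x"
  shows "x = 0"
proof (rule ccontr)
  assume "x \<noteq> 0"
  define k where "k = nat \<bar>x\<bar>"
  have "int k < 2 ^ k" using less_exp[of k] by (simp add: of_nat_less_iff[symmetric])
  also have "\<dots> \<le> v ^ k" using v by (intro power_mono) auto
  also have "\<dots> \<le> \<bar>x\<bar>" using dvd_imp_le_int[OF \<open>x \<noteq> 0\<close>, of "v ^ k"] dvd v by simp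
  finally show False unfolding k_def by simp
qed

lemma abs_le_if_dvd_diff_half:
  fixes M a N :: int
  assumes "M dvd (N - a)" and a: "- M < 2 * a" "2 * a \<le> M"
  shows "\<bar>a\<bar> \<le> \<bar>N\<bar>"
proof -
  obtain q where q: "N - a = M * q" using assms(1) by (rule dvdE)
  show ?thesis
  proof (cases "q = 0")
    case False
    have "M * 1 \<le> M * \<bar>q\<bar>" using False a by (intro mult_left_mono) auto
    then have "M \<le> \<bar>M * q\<bar>" using a by (simp add: abs_mult)
    then show ?thesis using q a by linarith
  qed (use q in simp)
qed

lemma eq_if_dvd_diff_half:
  fixes M a b :: int
  assumes "M dvd (a - b)" and bounds: "- M < 2 * a" "2 * a \<le> M" "- M < 2 * b" "2 * b \<le> M"
  shows "a = b"
proof -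
  obtain q where q: "a - b = M * q" using assms(1) by (rule dvdE)
  have "\<bar>a - b\<bar> < M" using bounds by arith
  then have "M * \<bar>q\<bar> < M * 1" using q bounds by (simp add: abs_mult)
  then have "\<bar>q\<bar> < 1" using bounds by (simp add: mult_less_cancel_left_pos)
  then show ?thesis using q by simp
qed

locale vadic_integers =
  fixes v :: int and Z :: "'z::idom itself"
  assumes prime_v: "prime v" and Zv: "is_vadic_integers v Z"
begin

lemma two_le_v: "2 \<le> v"
  using prime_gt_1_int[OF prime_v] by simp

lemma of_int_pow_dvd_iff: "(of_int (v ^ k) :: 'z) dvd of_int a \<longleftrightarrow> v ^ k dvd a"
  using Zv unfolding is_vadic_integers_def by blast

lemma exists_int_cong: "\<exists>a::int. (of_int (v ^ k) :: 'z) dvd (x - of_int a)"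
  using Zv unfolding is_vadic_integers_def by blast

lemma of_int_eq_0_iff_int: "(of_int a :: 'z) = 0 \<longleftrightarrow> a = 0"
proof
  assume "(of_int a :: 'z) = 0"
  then have "\<forall>k. v ^ k dvd a" using of_int_pow_dvd_iff by (metis dvd_0_right)
  then show "a = 0" by (rule pow_dvd_all_imp_eq_0[OF two_le_v])
qed simp

lemma smod_v_ex1:
  "\<exists>!a. - (v ^ l) < 2 * a \<and> 2 * a \<le> v ^ l \<and> (of_int (v ^ l) :: 'z) dvd (c - of_int a)"
proof -
  define M where "M = v ^ l"
  have "0 < M" unfolding M_def using two_le_v by simp
  obtain a0 where a0: "(of_int M :: 'z) dvd (c - of_int a0)"
    using exists_int_cong unfolding M_def by blast
  define a1 where "a1 = a0 mod M"
  define a where "a = (if 2 * a1 \<le> M then a1 else a1 - M)"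
  have "0 \<le> a1" "a1 < M" unfolding a1_def using \<open>0 < M\<close> by auto
  then have a: "- M < 2 * a" "2 * a \<le> M" unfolding a_def by auto
  have "M dvd (a0 - a1)" unfolding a1_def by (rule dvd_minus_mod)
  moreover have "M dvd (a1 - a)" unfolding a_def by simp
  ultimately have "M dvd (a0 - a1) + (a1 - a)" by (rule dvd_add)
  then have "M dvd (a0 - a)" by simp
  then have "(of_int M :: 'z) dvd of_int (a0 - a)" by (rule of_int_hom.hom_dvd)
  then have "(of_int M :: 'z) dvd (c - of_int a0) + of_int (a0 - a)" using a0 by (rule dvd_add[rotated])
  then have "(of_int M :: 'z) dvd (c - of_int a)" by simp
  moreover have "b = a" if "- M < 2 * b" "2 * b \<le> M" "(of_int M :: 'z) dvd (c - of_int b)" for b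
  proof (rule eq_if_dvd_diff_half[OF _ that(1,2) a])
    have "(of_int M :: 'z) dvd (c - of_int a) - (c - of_int b)"
      using dvd_diff[OF \<open>(of_int M :: 'z) dvd (c - of_int a)\<close> that(3)] .
    then have "(of_int M :: 'z) dvd of_int (b - a)" by simp
    then show "M dvd (b - a)" using of_int_pow_dvd_iff unfolding M_def by blast
  qed
  ultimately show ?thesis using a unfolding M_def by blast
qed

lemma smod_v_spec:
  "- (v ^ l) < 2 * smod_v v l c" "2 * smod_v v l c \<le> v ^ l"
  "(of_int (v ^ l) :: 'z) dvd (c - of_int (smod_v v l c))"
  using theI'[OF smod_v_ex1[of l c]] unfolding smod_v_def by auto

lemma abs_smod_v_le:
  assumes "(of_int (v ^ l) :: 'z) dvd (c - of_int N)"
  shows "\<bar>smod_v v l c\<bar> \<le> \<bar>N\<bar>"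
proof (rule abs_le_if_dvd_diff_half[OF _ smod_v_spec(1,2)])
  have "(of_int (v ^ l) :: 'z) dvd (c - of_int (smod_v v l c)) - (c - of_int N)"
    using dvd_diff[OF smod_v_spec(3) assms] .
  then have "(of_int (v ^ l) :: 'z) dvd of_int (N - smod_v v l c)" by simp
  then show "v ^ l dvd (N - smod_v v l c)" using of_int_pow_dvd_iff by blast
qed

lemma of_int_fract_eq_0_iff: "(of_int a :: 'z fract) = 0 \<longleftrightarrow> a = 0"
  using of_int_eq_0_iff_int[of a] to_fract_hom.hom_0_iff by (metis to_fract_hom.hom_of_int)

lemma rat_to_fract_of_int_div:
  assumes b: "b \<noteq> 0"
  shows "rat_to_fract (of_int a / of_int b :: rat) = (of_int a / of_int b :: 'z fract)"
proof -
  obtain a' b' where q: "quotient_of (of_int a / of_int b) = (a', b')" by force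
  have "b' > 0" using quotient_of_denom_pos[OF q] .
  have "(of_int a' / of_int b' :: rat) = of_int a / of_int b" using quotient_of_div[OF q] by simp
  then have "a' * b = a * b'" using b \<open>b' > 0\<close> by (simp add: frac_eq_eq) (metis of_int_eq_iff of_int_mult)
  then have "(of_int a' * of_int b :: 'z fract) = of_int a * of_int b'" by (metis of_int_mult)
  moreover have "(of_int b :: 'z fract) \<noteq> 0" "(of_int b' :: 'z fract) \<noteq> 0"
    using b \<open>b' > 0\<close> of_int_fract_eq_0_iff by auto
  ultimately have "(of_int a' / of_int b' :: 'z fract) = of_int a / of_int b" by (simp add: frac_eq_eq)
  then show ?thesis unfolding rat_to_fract_def q Fract_conv_to_fract by (simp add: to_fract_hom.hom_of_int)
qed

lemma rat_to_fract_hom: "idom_hom (rat_to_fract :: rat \<Rightarrow> 'z fract)"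
proof -
  have rep: "\<exists>a b. b \<noteq> 0 \<and> x = of_int a / of_int b" for x :: rat
    by (metis prod.exhaust quotient_of_denom_pos quotient_of_div less_irrefl)
  have "rat_to_fract (x + y) = (rat_to_fract x + rat_to_fract y :: 'z fract)"
    and "rat_to_fract (x * y) = (rat_to_fract x * rat_to_fract y :: 'z fract)" for x y :: rat
  proof -
    obtain a b c d where bd: "b \<noteq> 0" "d \<noteq> 0"
      and x: "x = of_int a / of_int b" and y: "y = of_int c / of_int d"
      using rep[of x] rep[of y] by blast
    have "x + y = of_int (a * d + c * b) / of_int (b * d)" "x * y = of_int (a * c) / of_int (b * d)"
      using bd unfolding x y by (simp_all add: add_frac_eq)
    then have "rat_to_fract (x + y) = (of_int (a * d + c * b) / of_int (b * d) :: 'z fract)"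
      and "rat_to_fract (x * y) = (of_int (a * c) / of_int (b * d) :: 'z fract)"
      using bd by (auto intro: rat_to_fract_of_int_div simp del: of_int_add of_int_mult)
    moreover have "rat_to_fract x = (of_int a / of_int b :: 'z fract)"
      and "rat_to_fract y = (of_int c / of_int d :: 'z fract)"
      unfolding x y using bd by (simp_all add: rat_to_fract_of_int_div)
    ultimately show "rat_to_fract (x + y) = (rat_to_fract x + rat_to_fract y :: 'z fract)"
      and "rat_to_fract (x * y) = (rat_to_fract x * rat_to_fract y :: 'z fract)"
      using bd of_int_fract_eq_0_iff by (simp_all add: add_frac_eq)
  qed
  moreover have "rat_to_fract (0 :: rat) = (0 :: 'z fract)" "rat_to_fract (1 :: rat) = (1 :: 'z fract)"
    using rat_to_fract_of_int_div[of 1 0] rat_to_fract_of_int_div[of 1 1] by simp_all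
  ultimately show ?thesis by unfold_locales auto
qed

lemma rat_to_fract_of_int: "rat_to_fract (of_int a :: rat) = (of_int a :: 'z fract)"
  using rat_to_fract_of_int_div[of 1 a] by simp

lemma Phi_eq_of_int_poly:
  fixes fs :: "nat \<Rightarrow> 'z poly" and P f :: "int poly" and g :: "rat poly"
  assumes fs_fact: "map_poly of_int f = smult (of_int (lead_coeff f)) (\<Prod>k\<in>{1..r}. fs k)"
    and mon: "\<forall>k\<in>{1..r}. monic (fs k)" and e01: "\<forall>k\<in>{1..r}. e k \<in> {0, 1}"
    and g: "map_poly rat_to_fract g = map_poly to_fract (\<Prod>k\<in>{1..r}. fs k ^ nat (e k))"
    and P: "g * of_int_poly P = of_int_poly f * pderiv g"
  shows "Phi f fs r e = map_poly of_int P"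
proof -
  interpret rf: idom_hom "rat_to_fract :: rat \<Rightarrow> 'z fract" by (rule rat_to_fract_hom)
  interpret rfp: map_poly_idom_hom "rat_to_fract :: rat \<Rightarrow> 'z fract" ..
  interpret tfp: map_poly_inj_idom_hom "to_fract :: 'z \<Rightarrow> 'z fract" ..
  define G where "G = (\<Prod>k\<in>{1..r}. fs k ^ nat (e k))"
  define F where "F = (map_poly of_int f :: 'z poly)"
  have of_int_poly: "map_poly (rat_to_fract :: rat \<Rightarrow> 'z fract) (of_int_poly X)
      = map_poly to_fract (map_poly of_int X :: 'z poly)" for X :: "int poly"
    by (simp add: map_poly_map_poly o_def rat_to_fract_of_int to_fract_hom.hom_of_int)
  have "map_poly to_fract G * map_poly to_fract (map_poly of_int P :: 'z poly)
      = map_poly to_fract F * pderiv (map_poly to_fract G)"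
    using arg_cong[OF P, of "map_poly (rat_to_fract :: rat \<Rightarrow> 'z fract)"]
    unfolding rfp.hom_mult rf.map_poly_pderiv of_int_poly g G_def F_def .
  then have "map_poly to_fract (G * map_poly of_int P) = map_poly to_fract (F * pderiv G)"
    by (simp only: tfp.hom_mult to_fract_hom.map_poly_pderiv)
  then have "G * map_poly of_int P = F * pderiv G" by (rule tfp.injectivity)
  also have "\<dots> = G * Phi f fs r e"
    unfolding G_def F_def by (rule prod_factors_mult_Phi[OF fs_fact mon e01, symmetric])
  finally show ?thesis
    using mon unfolding G_def by (auto simp: prod_zero_iff)
qed

lemma coeff_Phi_cong:
  fixes fs :: "nat \<Rightarrow> 'z poly"
  shows "(of_int (v ^ l) :: 'z)
    dvd (coeff (Phi f fs r e) i - of_int (\<Sum>k\<in>{1..r}. e k * Tprime v l f fs r i (unitv k)))"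
proof -
  define X where "X = (\<lambda>k. coeff (pquot (map_poly of_int f) (fs k) * pderiv (fs k)) i)"
  have "Tprime v l f fs r i (unitv k) = smod_v v l (X k)" if "k \<in> {1..r}" for k
    unfolding Tprime_def X_def Phi_unitv[OF that] ..
  then have "coeff (Phi f fs r e) i - of_int (\<Sum>k\<in>{1..r}. e k * Tprime v l f fs r i (unitv k))
      = (\<Sum>k\<in>{1..r}. of_int (e k) * (X k - of_int (smod_v v l (X k))))"
    unfolding coeff_Phi by (simp add: X_def sum_subtractf[symmetric] right_diff_distrib)
  also have "(of_int (v ^ l) :: 'z) dvd \<dots>"
    by (intro dvd_sum dvd_mult smod_v_spec(3))
  finally show ?thesis .
qed

lemma abs_Tprime_le:
  fixes fs :: "nat \<Rightarrow> 'z poly" and a :: int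
  shows "\<bar>Tprime v l f fs r i e\<bar>
    \<le> \<bar>(\<Sum>k\<in>{1..r}. e k * Tprime v l f fs r i (unitv k)) + a * v ^ l\<bar>"
  unfolding Tprime_def[of v l f fs r i e]
proof (rule abs_smod_v_le)
  have "(of_int (v ^ l) :: 'z) dvd
      (coeff (Phi f fs r e) i - of_int (\<Sum>k\<in>{1..r}. e k * Tprime v l f fs r i (unitv k)))
        - of_int (a * v ^ l)"
    by (intro dvd_diff coeff_Phi_cong) (simp add: of_int_mult)
  then show "(of_int (v ^ l) :: 'z) dvd (coeff (Phi f fs r e) i
      - of_int ((\<Sum>k\<in>{1..r}. e k * Tprime v l f fs r i (unitv k)) + a * v ^ l))"
    by (simp add: algebra_simps)
qed

end

section \<open>The lattice Lambda\<close>

text \<open>Generators of the lattice Lambda of Proposition 4.4: b'_j for j \<le> rr and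
  P = (0, ..., 0, Q) as generator rr + 1.\<close>

definition lifted_basis ::
  "nat \<Rightarrow> nat \<Rightarrow> (nat \<Rightarrow> nat \<Rightarrow> int) \<Rightarrow> (nat \<Rightarrow> real) \<Rightarrow> real \<Rightarrow> nat \<Rightarrow> nat \<Rightarrow> real" where
  "lifted_basis r rr bb T Q = (\<lambda>j k.
     if j \<le> rr then
       (if k \<in> {1..r} then real_of_int (bb j k)
        else if k = r + 1 then (\<Sum>k'\<in>{1..r}. real_of_int (bb j k') * T k')
        else 0)
     else (if k = r + 1 then Q else 0))"

lemma lifted_basis_comb:
  fixes c :: "nat \<Rightarrow> int"
  assumes x_def: "x = (\<lambda>k. \<Sum>t\<in>{1..rr + 1}. real_of_int (c t) * lifted_basis r rr bb T Q t k)"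
  shows lifted_basis_comb_coord: "k \<in> {1..r} \<Longrightarrow> x k = (\<Sum>t\<in>{1..rr}. real_of_int (c t * bb t k))"
    and lifted_basis_comb_last:
      "x (r + 1) = (\<Sum>k\<in>{1..r}. real_of_int (\<Sum>t\<in>{1..rr}. c t * bb t k) * T k) + real_of_int (c (rr + 1)) * Q"
    and lifted_basis_comb_zero: "k \<notin> {1..r + 1} \<Longrightarrow> x k = 0"
proof -
  have split: "{1..rr + 1} = insert (rr + 1) {1..rr}" by auto
  show "k \<in> {1..r} \<Longrightarrow> x k = (\<Sum>t\<in>{1..rr}. real_of_int (c t * bb t k))"
    unfolding x_def split by (auto simp: lifted_basis_def intro!: sum.cong)
  have "x (r + 1) = real_of_int (c (rr + 1)) * Q
      + (\<Sum>t\<in>{1..rr}. real_of_int (c t) * (\<Sum>k\<in>{1..r}. real_of_int (bb t k) * T k))"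
    unfolding x_def split by (auto simp: lifted_basis_def intro!: sum.cong)
  also have "(\<Sum>t\<in>{1..rr}. real_of_int (c t) * (\<Sum>k\<in>{1..r}. real_of_int (bb t k) * T k))
      = (\<Sum>k\<in>{1..r}. real_of_int (\<Sum>t\<in>{1..rr}. c t * bb t k) * T k)"
    by (simp add: sum_distrib_left sum_distrib_right mult_ac) (rule sum.swap)
  finally show "x (r + 1) = (\<Sum>k\<in>{1..r}. real_of_int (\<Sum>t\<in>{1..rr}. c t * bb t k) * T k)
      + real_of_int (c (rr + 1)) * Q" by simp
  show "k \<notin> {1..r + 1} \<Longrightarrow> x k = 0"
    unfolding x_def by (auto simp: lifted_basis_def intro!: sum.neutral)
qed

lemma zspan_lifted_basis_iff:
  "x \<in> zspan {1..rr + 1} (lifted_basis r rr bb T Q) \<longleftrightarrow>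
     restrict_coords r x \<in> zspan {1..rr} (\<lambda>j. restrict_coords r (\<lambda>k. real_of_int (bb j k))) \<and>
     (\<exists>a::int. x (r + 1) = (\<Sum>k\<in>{1..r}. x k * T k) + a * Q) \<and>
     (\<forall>k. k \<notin> {1..r + 1} \<longrightarrow> x k = 0)"
  (is "?lattice \<longleftrightarrow> ?first \<and> ?last \<and> ?zero")
proof
  assume ?lattice
  then obtain c :: "nat \<Rightarrow> int"
    where x: "x = (\<lambda>k. \<Sum>t\<in>{1..rr + 1}. real_of_int (c t) * lifted_basis r rr bb T Q t k)"
    unfolding zspan_def by blast
  have "restrict_coords r x
      = (\<lambda>k. \<Sum>t\<in>{1..rr}. real_of_int (c t) * restrict_coords r (\<lambda>k. real_of_int (bb t k)) k)"
    by (auto simp: fun_eq_iff restrict_coords_def lifted_basis_comb_coord[OF x])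
  then have ?first unfolding zspan_def mem_Collect_eq by (rule exI[of _ c])
  moreover have "x (r + 1) = (\<Sum>k\<in>{1..r}. x k * T k) + c (rr + 1) * Q"
    unfolding lifted_basis_comb_last[OF x] by (simp add: lifted_basis_comb_coord[OF x])
  ultimately show "?first \<and> ?last \<and> ?zero" by (auto simp: lifted_basis_comb_zero[OF x])
next
  assume "?first \<and> ?last \<and> ?zero"
  then obtain c' :: "nat \<Rightarrow> int" and a :: int
    where first: "restrict_coords r x
        = (\<lambda>k. \<Sum>t\<in>{1..rr}. real_of_int (c' t) * restrict_coords r (\<lambda>k. real_of_int (bb t k)) k)"
      and last: "x (r + 1) = (\<Sum>k\<in>{1..r}. x k * T k) + a * Q"
      and zero: "\<forall>k. k \<notin> {1..r + 1} \<longrightarrow> x k = 0"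
    unfolding zspan_def by blast
  define c where "c = c'(rr + 1 := a)"
  have coord: "x k = (\<Sum>t\<in>{1..rr}. real_of_int (c t * bb t k))" if "k \<in> {1..r}" for k
    using fun_cong[OF first, of k] that by (simp add: restrict_coords_def c_def)
  define y where "y = (\<lambda>k. \<Sum>t\<in>{1..rr + 1}. real_of_int (c t) * lifted_basis r rr bb T Q t k)"
  have "x = y"
  proof
    fix k
    consider "k \<in> {1..r}" | "k = r + 1" | "k \<notin> {1..r + 1}" by fastforce
    then show "x k = y k"
    proof cases
      case 2
      have "y (r + 1) = (\<Sum>k\<in>{1..r}. real_of_int (\<Sum>t\<in>{1..rr}. c t * bb t k) * T k) + a * Q"
        unfolding lifted_basis_comb_last[OF y_def] by (simp add: c_def)
      also have "\<dots> = x (r + 1)"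
        unfolding last by (simp add: coord)
      finally show ?thesis using 2 by simp
    qed (simp_all add: coord lifted_basis_comb_coord[OF y_def] lifted_basis_comb_zero[OF y_def] zero)
  qed
  then show ?lattice unfolding zspan_def y_def mem_Collect_eq by (rule exI[of _ c])
qed

lemma restrict_zspan_prefix_subset:
  assumes "zspan {1..rr + 1} b = zspan {1..rr + 1} (lifted_basis r rr bb T Q)" "t \<le> rr + 1"
  shows "zspan {1..t} (\<lambda>j. restrict_coords r (b j))
    \<subseteq> zspan {1..rr} (\<lambda>j. restrict_coords r (\<lambda>k. real_of_int (bb j k)))"
proof (rule zspan_subsetI[OF finite_atLeastAtMost finite_atLeastAtMost], intro ballI)
  fix j assume "j \<in> {1..t}"
  then have "b j \<in> zspan {1..rr + 1} (lifted_basis r rr bb T Q)"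
    using assms generator_in_zspan[of "{1..rr + 1}" j b] by auto
  then show "restrict_coords r (b j) \<in> zspan {1..rr} (\<lambda>j. restrict_coords r (\<lambda>k. real_of_int (bb j k)))"
    unfolding zspan_lifted_basis_iff by blast
qed

context vadic_integers
begin

lemma abs_Tval_le_vnorm:
  fixes fs :: "nat \<Rightarrow> 'z poly" and e :: "nat \<Rightarrow> int"
  assumes x: "x \<in> zspan {1..rr + 1}
      (lifted_basis r rr bb (\<lambda>k. Tval v l f fs r i (unitv k)) (real_of_int (v ^ l) / Bbound f i))"
    and e: "\<forall>k\<in>{1..r}. real_of_int (e k) = x k" and B: "0 < Bbound f i"
  shows "\<bar>Tval v l f fs r i e\<bar> \<le> vnorm (r + 1) x"
proof -
  obtain a :: int
    where a: "x (r + 1) = (\<Sum>k\<in>{1..r}. x k * Tval v l f fs r i (unitv k)) + a * (v ^ l / Bbound f i)"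
    using x unfolding zspan_lifted_basis_iff by auto
  define N where "N = (\<Sum>k\<in>{1..r}. e k * Tprime v l f fs r i (unitv k)) + a * v ^ l"
  have "x (r + 1) = N / Bbound f i"
    unfolding a N_def Tval_def using e by (simp add: sum_divide_distrib add_divide_distrib)
  moreover have "\<bar>Tprime v l f fs r i e\<bar> \<le> \<bar>N\<bar>"
    unfolding N_def by (rule abs_Tprime_le)
  ultimately have "\<bar>Tval v l f fs r i e\<bar> \<le> \<bar>x (r + 1)\<bar>"
    using B unfolding Tval_def by (simp add: divide_right_mono)
  also have "\<dots> \<le> vnorm (r + 1) x" by (rule abs_coord_le_vnorm) simp
  finally show ?thesis .
qed

lemma rational_factor_lattice_vector:
  fixes fs :: "nat \<Rightarrow> 'z poly" and g :: "rat poly" and e :: "nat \<Rightarrow> int"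
  assumes fs_fact: "map_poly of_int f = smult (of_int (lead_coeff f)) (\<Prod>k\<in>{1..r}. fs k)"
    and mon: "\<forall>k\<in>{1..r}. monic (fs k)" and e01: "\<forall>k\<in>{1..r}. e k \<in> {0, 1}"
    and g_dvd: "g dvd of_int_poly f" and "f \<noteq> 0"
    and g: "map_poly rat_to_fract g = map_poly to_fract (\<Prod>k\<in>{1..r}. fs k ^ nat (e k))"
    and e: "restrict_coords r (\<lambda>k. real_of_int (e k))
      \<in> zspan {1..rr} (\<lambda>j. restrict_coords r (\<lambda>k. real_of_int (bb j k)))"
    and B: "0 < Bbound f i"
  shows "\<exists>y \<in> zspan {1..rr + 1}
      (lifted_basis r rr bb (\<lambda>k. Tval v l f fs r i (unitv k)) (real_of_int (v ^ l) / Bbound f i)).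
    restrict_coords r y = restrict_coords r (\<lambda>k. real_of_int (e k)) \<and> vnorm (r + 1) y \<le> sqrt (r + 1)"
proof -
  obtain P where P: "g * of_int_poly P = of_int_poly f * pderiv g"
    and P_bound: "\<bar>real_of_int (coeff P i)\<bar> \<le> Bbound f i"
    using rat_factor_log_deriv_int_bound[OF g_dvd \<open>f \<noteq> 0\<close>] by blast
  have "Phi f fs r e = map_poly of_int P"
    by (rule Phi_eq_of_int_poly[OF fs_fact mon e01 g P])
  then have "(of_int (v ^ l) :: 'z) dvd of_int (coeff P i - (\<Sum>k\<in>{1..r}. e k * Tprime v l f fs r i (unitv k)))"
    using coeff_Phi_cong[of l f fs r e i] by simp
  then obtain q where "coeff P i - (\<Sum>k\<in>{1..r}. e k * Tprime v l f fs r i (unitv k)) = v ^ l * q"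
    unfolding of_int_pow_dvd_iff by (rule dvdE)
  then have q: "coeff P i = (\<Sum>k\<in>{1..r}. e k * Tprime v l f fs r i (unitv k)) + q * v ^ l"
    by (simp add: algebra_simps)
  define y where "y = (\<lambda>k. if k \<in> {1..r} then real_of_int (e k)
    else if k = r + 1 then real_of_int (coeff P i) / Bbound f i else 0)"
  have y_restrict: "restrict_coords r y = restrict_coords r (\<lambda>k. real_of_int (e k))"
    by (simp add: restrict_coords_def y_def fun_eq_iff)
  have "y \<in> zspan {1..rr + 1}
      (lifted_basis r rr bb (\<lambda>k. Tval v l f fs r i (unitv k)) (real_of_int (v ^ l) / Bbound f i))"
    unfolding zspan_lifted_basis_iff
  proof (intro conjI exI allI impI)
    show "restrict_coords r y \<in> zspan {1..rr} (\<lambda>j. restrict_coords r (\<lambda>k. real_of_int (bb j k)))"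
      using e unfolding y_restrict .
    show "y (r + 1) = (\<Sum>k\<in>{1..r}. y k * Tval v l f fs r i (unitv k)) + q * (v ^ l / Bbound f i)"
      by (simp add: y_def q Tval_def sum_divide_distrib add_divide_distrib)
  qed (auto simp: y_def)
  moreover have "vnorm (r + 1) y \<le> sqrt (r + 1)"
    using e01 P_bound B by (intro vnorm_le_sqrt_dim) (force simp: y_def divide_le_eq_1 abs_div)
  ultimately show ?thesis using y_restrict by blast
qed

lemma rational_factor_in_prefix:
  fixes fs :: "nat \<Rightarrow> 'z poly" and g :: "rat poly" and e :: "nat \<Rightarrow> int"
  assumes fs_fact: "map_poly of_int f = smult (of_int (lead_coeff f)) (\<Prod>k\<in>{1..r}. fs k)"
    and mon: "\<forall>k\<in>{1..r}. monic (fs k)" and e01: "\<forall>k\<in>{1..r}. e k \<in> {0, 1}"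
    and g_dvd: "g dvd of_int_poly f" and f0: "f \<noteq> 0"
    and g: "map_poly rat_to_fract g = map_poly to_fract (\<Prod>k\<in>{1..r}. fs k ^ nat (e k))"
    and e: "restrict_coords r (\<lambda>k. real_of_int (e k))
      \<in> zspan {1..rr} (\<lambda>j. restrict_coords r (\<lambda>k. real_of_int (bb j k)))"
    and B: "0 < Bbound f i"
    and lattice: "zspan {1..rr + 1} b = zspan {1..rr + 1}
      (lifted_basis r rr bb (\<lambda>k. Tval v l f fs r i (unitv k)) (real_of_int (v ^ l) / Bbound f i))"
    and tail: "\<forall>j. t < j \<and> j \<le> rr + 1 \<longrightarrow> real r + 2 < vnorm (r + 1) (gso (r + 1) b j)"
    and "t \<le> rr + 1"
  shows "restrict_coords r (\<lambda>k. real_of_int (e k)) \<in> zspan {1..t} (\<lambda>j. restrict_coords r (b j))"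
proof -
  obtain y where y: "y \<in> zspan {1..rr + 1} b"
    "restrict_coords r y = restrict_coords r (\<lambda>k. real_of_int (e k))" "vnorm (r + 1) y \<le> sqrt (r + 1)"
    using rational_factor_lattice_vector[OF fs_fact mon e01 g_dvd f0 g e B, where l = l]
    unfolding lattice by blast
  have "sqrt (r + 1) \<le> real r + 2" by (rule real_le_lsqrt) (auto simp: power2_eq_square algebra_simps)
  then have "vnorm (r + 1) y \<le> real r + 2" using y(3) by linarith
  then have "y \<in> zspan {1..t} b" by (rule short_lattice_vector_in_prefix[OF y(1) _ tail \<open>t \<le> rr + 1\<close>])
  from restrict_coords_zspan[OF this, of r] show ?thesis unfolding y(2) .
qed


lemma rational_factors_zspan_subset_prefix:
  fixes fs :: "nat \<Rightarrow> 'z poly" and g :: "nat \<Rightarrow> rat poly"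
  assumes fs_fact: "map_poly of_int f = smult (of_int (lead_coeff f)) (\<Prod>k\<in>{1..r}. fs k)"
    and mon: "\<forall>k\<in>{1..r}. monic (fs k)"
    and g_fact: "(of_int_poly f :: rat poly) = smult (of_int (lead_coeff f)) (\<Prod>j\<in>{1..s}. g j)"
    and w01: "\<forall>j\<in>{1..s}. \<forall>k\<in>{1..r}. w j k \<in> {0, 1}"
    and w_def: "\<forall>j\<in>{1..s}. map_poly rat_to_fract (g j)
                   = map_poly to_fract (\<Prod>k\<in>{1..r}. fs k ^ nat (w j k))"
    and W_sub: "zspan {1..s} (\<lambda>j. restrict_coords r (\<lambda>k. real_of_int (w j k)))
      \<subseteq> zspan {1..rr} (\<lambda>j. restrict_coords r (\<lambda>k. real_of_int (bb j k)))"
    and f0: "f \<noteq> 0" and B: "0 < Bbound f i"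
    and lattice: "zspan {1..rr + 1} b = zspan {1..rr + 1}
      (lifted_basis r rr bb (\<lambda>k. Tval v l f fs r i (unitv k)) (real_of_int (v ^ l) / Bbound f i))"
    and tail: "\<forall>j. t < j \<and> j \<le> rr + 1 \<longrightarrow> real r + 2 < vnorm (r + 1) (gso (r + 1) b j)"
    and "t \<le> rr + 1"
  shows "zspan {1..s} (\<lambda>j. restrict_coords r (\<lambda>k. real_of_int (w j k)))
    \<subseteq> zspan {1..t} (\<lambda>j. restrict_coords r (b j))"
proof (rule zspan_subsetI[OF finite_atLeastAtMost finite_atLeastAtMost], intro ballI)
  fix j assume j: "j \<in> {1..s}"
  have "(\<Prod>j\<in>{1..s}. g j) = g j * (\<Prod>j\<in>{1..s} - {j}. g j)" using j by (intro prod.remove) auto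
  then have "g j dvd of_int_poly f" unfolding g_fact by (simp add: dvd_smult)
  moreover have "restrict_coords r (\<lambda>k. real_of_int (w j k))
      \<in> zspan {1..rr} (\<lambda>j. restrict_coords r (\<lambda>k. real_of_int (bb j k)))"
    using j by (intro subsetD[OF W_sub] generator_in_zspan) auto
  moreover have "\<forall>k\<in>{1..r}. w j k \<in> {0, 1}"
    "map_poly rat_to_fract (g j) = map_poly to_fract (\<Prod>k\<in>{1..r}. fs k ^ nat (w j k))"
    using w01 w_def j by auto
  ultimately show "restrict_coords r (\<lambda>k. real_of_int (w j k)) \<in> zspan {1..t} (\<lambda>j. restrict_coords r (b j))"
    by (intro rational_factor_in_prefix[OF fs_fact mon _ _ f0 _ _ B lattice tail \<open>t \<le> rr + 1\<close>])
qed

end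

theorem proposition4p4:
  fixes v :: int and l :: nat and f :: "int poly" and r s :: nat
    and fs :: "nat \<Rightarrow> 'z::idom poly" and g :: "nat \<Rightarrow> rat poly" and w :: "nat \<Rightarrow> nat \<Rightarrow> int"
    and i rr :: nat and bb :: "nat \<Rightarrow> nat \<Rightarrow> int" and b :: "nat \<Rightarrow> nat \<Rightarrow> real"
  assumes v_prime: "prime v"
    and Zv: "is_vadic_integers v TYPE('z)"
    and f_sep: "separable (of_int_poly f :: rat poly)"
    and f_deg: "degree f \<ge> 2"
    and lc: "\<not> v dvd lead_coeff f"
    and f_sep_mod: "poly_mod.coprime_m v f (pderiv f)"
    and fs_irr: "\<forall>k\<in>{1..r}. monic (fs k) \<and> irreducible (map_poly to_fract (fs k))"
    and fs_fact: "map_poly of_int f = smult (of_int (lead_coeff f)) (\<Prod>k\<in>{1..r}. fs k)"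
    and g_irr: "\<forall>j\<in>{1..s}. monic (g j) \<and> irreducible (g j)"
    and g_fact: "(of_int_poly f :: rat poly) = smult (of_int (lead_coeff f)) (\<Prod>j\<in>{1..s}. g j)"
    and w01: "\<forall>j\<in>{1..s}. \<forall>k\<in>{1..r}. w j k \<in> {0, 1}"
    and w_def: "\<forall>j\<in>{1..s}. map_poly rat_to_fract (g j)
                   = map_poly to_fract (\<Prod>k\<in>{1..r}. fs k ^ nat (w j k))"
    and l_pos: "l > 0"
    and i_le: "i \<le> degree f - 2"
    and bb_indep: "lin_indep r {1..rr} (\<lambda>j k. real_of_int (bb j k))"
    and W_sub: "zspan {1..s} (\<lambda>j k. if k \<in> {1..r} then real_of_int (w j k) else 0)
                \<subseteq> zspan {1..rr} (\<lambda>j k. if k \<in> {1..r} then real_of_int (bb j k) else 0)"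
    and b_basis: "zspan {1..rr + 1} b = zspan {1..rr + 1} (\<lambda>j k.
          if j \<le> rr then
            (if k \<in> {1..r} then real_of_int (bb j k)
             else if k = r + 1 then (\<Sum>k'\<in>{1..r}. real_of_int (bb j k') * Tval v l f fs r i (unitv k'))
             else 0)
          else (if k = r + 1 then real_of_int (v ^ l) / Bbound f i else 0))"
    and b_indep: "lin_indep (r + 1) {1..rr + 1} b"
    and b_lll: "lll_reduced (r + 1) (rr + 1) b"
  shows "let ri = (LEAST t. \<forall>j. t < j \<and> j \<le> rr + 1 \<longrightarrow> vnorm (r + 1) (gso (r + 1) b j) > real r + 2);
             bi = (\<lambda>j k. if k \<in> {1..r} then b j k else 0)
         in zspan {1..s} (\<lambda>j k. if k \<in> {1..r} then real_of_int (w j k) else 0) \<subseteq> zspan {1..ri} bi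
          \<and> zspan {1..ri} bi \<subseteq> zspan {1..rr} (\<lambda>j k. if k \<in> {1..r} then real_of_int (bb j k) else 0)
          \<and> (\<forall>j\<in>{1..ri}. vnorm r (bi j) \<le> (real r + 2) * 2 ^ r)
          \<and> (\<forall>j\<in>{1..ri}. \<forall>e::nat \<Rightarrow> int. (\<forall>k\<in>{1..r}. real_of_int (e k) = bi j k) \<longrightarrow>
               \<bar>Tval v l f fs r i e\<bar> \<le> (real r + 2) * 2 ^ r)"
proof -
  interpret vadic_integers v "TYPE('z)" using v_prime Zv by unfold_locales
  let ?\<Lambda> = "lifted_basis r rr bb (\<lambda>k. Tval v l f fs r i (unitv k)) (real_of_int (v ^ l) / Bbound f i)"
  let ?W = "\<lambda>j. restrict_coords r (\<lambda>k. real_of_int (w j k))"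
  let ?L = "\<lambda>j. restrict_coords r (\<lambda>k. real_of_int (bb j k))"
  define bi where "bi = (\<lambda>j. restrict_coords r (b j))"
  define ri where "ri = (LEAST t. \<forall>j. t < j \<and> j \<le> rr + 1 \<longrightarrow> vnorm (r + 1) (gso (r + 1) b j) > real r + 2)"
  have restrict_eqs: "(\<lambda>j k. if k \<in> {1..r} then b j k else 0) = bi"
    "(\<lambda>j k. if k \<in> {1..r} then real_of_int (w j k) else 0) = ?W"
    "(\<lambda>j k. if k \<in> {1..r} then real_of_int (bb j k) else 0) = ?L"
    by (simp_all add: bi_def restrict_coords_def)
  have lattice: "zspan {1..rr + 1} b = zspan {1..rr + 1} ?\<Lambda>"
    using b_basis unfolding lifted_basis_def .
  have B: "0 < Bbound f i" using f_deg i_le by (intro Bbound_pos) linarith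
  have f0: "f \<noteq> 0" and mon: "\<forall>k\<in>{1..r}. monic (fs k)" using f_deg fs_irr by auto
  have ri: "ri \<le> rr + 1" "\<forall>j. ri < j \<and> j \<le> rr + 1 \<longrightarrow> real r + 2 < vnorm (r + 1) (gso (r + 1) b j)"
    "1 \<le> ri \<Longrightarrow> vnorm (r + 1) (gso (r + 1) b ri) \<le> real r + 2"
    unfolding ri_def by (rule Least_tail_le Least_tail_gt Least_tail_at)+
  have b_short: "vnorm (r + 1) (b j) \<le> (real r + 2) * 2 ^ r" if "j \<in> {1..ri}" for j
    using that ri lin_indep_card_le[OF bb_indep] by (intro lll_prefix_vnorm_le[OF b_lll]) auto
  have W: "zspan {1..s} ?W \<subseteq> zspan {1..ri} bi"
    using W_sub[unfolded restrict_eqs] unfolding bi_def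
    by (rule rational_factors_zspan_subset_prefix[OF fs_fact mon g_fact w01 w_def _ f0 B lattice ri(2,1)])
  have L: "zspan {1..ri} bi \<subseteq> zspan {1..rr} ?L"
    unfolding bi_def by (rule restrict_zspan_prefix_subset[OF lattice ri(1)])
  have norm: "\<forall>j\<in>{1..ri}. vnorm r (bi j) \<le> (real r + 2) * 2 ^ r"
    unfolding bi_def using b_short vnorm_restrict_coords_le[of r "r + 1", OF le_add1] order.trans by blast
  have T: "\<forall>j\<in>{1..ri}. \<forall>e::nat \<Rightarrow> int. (\<forall>k\<in>{1..r}. real_of_int (e k) = bi j k) \<longrightarrow>
      \<bar>Tval v l f fs r i e\<bar> \<le> (real r + 2) * 2 ^ r"
  proof (intro ballI allI impI)
    fix j e assume j: "j \<in> {1..ri}" and e: "\<forall>k\<in>{1..r}. real_of_int (e k) = bi j k"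
    have "b j \<in> zspan {1..rr + 1} ?\<Lambda>"
      unfolding lattice[symmetric] using j ri(1) by (intro generator_in_zspan) auto
    then have "\<bar>Tval v l f fs r i e\<bar> \<le> vnorm (r + 1) (b j)"
      using e B by (intro abs_Tval_le_vnorm) (auto simp: bi_def restrict_coords_def)
    then show "\<bar>Tval v l f fs r i e\<bar> \<le> (real r + 2) * 2 ^ r" using b_short[OF j] by linarith
  qed
  show ?thesis unfolding Let_def ri_def[symmetric] restrict_eqs by (intro conjI W L norm T)
qed
end
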